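(* Let $u$ be a trigonometric polynomial that is not identically zero and let $K>0$. There exists a constant $\eta=\eta(u,K)$ such that for every finite collection $b_1,\ldots,b_k\in\mathbb{R}$ and every interval $I\subset\mathbb{R}$ of length $K$, there exists a measurable subset $E\subset I$ with $|E|>|I|/2$ such that \[ \inf_{x\in E}\Big|\prod_{i=1}^k u(x+b_i)\Big|\ge e^{-\eta k}. \]
   Context: A trigonometric polynomial is a function $u(x)=\sum_{j=1}^m c_je^{2\pi i a_j x}$ with $a_j\in\mathbb{R}$, $c_j\in\mathbb{C}$ (not necessarily periodic). $|E|$ denotes Lebesgue measure. *)

theory Defs
  imports "HOL-Analysis.Analysis"
begin

definition trig_poly :: "(real \<Rightarrow> complex) \<Rightarrow> bool" where
  "trig_poly u \<longleftrightarrow> (\<exists>m::nat. \<exists>a::nat \<Rightarrow> real. \<exists>c::nat \<Rightarrow> complex.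
      \<forall>x. u x = (\<Sum>j<m. c j * exp (2 * pi * \<i> * complex_of_real (a j * x))))"

end

theory Submission
  imports Defs "HOL-Computational_Algebra.Polynomial"
begin

text \<open>Around every point, some derivative of order at most \<open>d\<close> of every translate of \<open>u\<close> has
  modulus at least \<open>\<kappa> > 0\<close>, because a polynomial in \<open>d/dx\<close> annihilates all frequencies but
  one. A function whose \<open>n\<close>-th derivative stays above \<open>c\<close> is at most \<open>t\<close> only on a set of
  measure \<open>O(t^(1/n))\<close> (the mean value theorem along \<open>2^n\<close> points spaced \<open>g\<close> apart), so
  \<open>{x \<in> [s, s+K]. |u (x + b)| \<le> t}\<close> has measure at most \<open>C t^(1/N)\<close>, uniformly in \<open>s\<close> and \<open>b\<close>.
  Summing over the levels \<open>t = e^-j\<close>, the number of levels that the factors \<open>u (x + b i)\<close> fall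
  below has integral at most \<open>C' k\<close> over \<open>I\<close>. By Markov's inequality it exceeds \<open>\<eta> k\<close> only on
  a set of measure \<open>C' / \<eta> < K / 2\<close>, and off that set the product is at least \<open>e^(-\<eta> k)\<close>.\<close>

section \<open>Sublevel sets of functions with a large derivative\<close>

lemma spaced_points_derivative_bound:
  fixes D :: "nat \<Rightarrow> real \<Rightarrow> real"
  assumes der: "\<And>m y. (D m has_real_derivative D (Suc m) y) (at y)"
    and low: "\<And>y. y \<in> {a..b} \<Longrightarrow> c \<le> \<bar>D n y\<bar>"
    and pts: "\<And>i. i < 2^n \<Longrightarrow> x i \<in> {a..b} \<and> \<bar>D 0 (x i)\<bar> \<le> t"
    and spaced: "\<And>i. Suc i < 2^n \<Longrightarrow> x i + g \<le> x (Suc i)"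
    and g: "g > 0"
  shows "c * g^n \<le> 2^n * t"
  using low pts spaced der
proof (induction n arbitrary: D x t)
  case 0
  then show ?case by force
next
  case (Suc n)
  note pts = Suc.prems(2) and spaced = Suc.prems(3) and der = Suc.prems(4)
  have gap: "x (2*i) + g \<le> x (2*i+1)" if "i < 2^n" for i
    using spaced[of "2*i"] that by simp
  \<comment> \<open>A mean value point between each pair of consecutive points; these are again spaced by
    at least \<open>g\<close> and \<open>D 1\<close> is at most \<open>2 t / g\<close> there.\<close>
  have "\<exists>z. i < 2^n \<longrightarrow> x (2*i) < z \<and> z < x (2*i+1) \<and>
      D 0 (x (2*i+1)) - D 0 (x (2*i)) = (x (2*i+1) - x (2*i)) * D 1 z" for i
  proof (cases "i < 2^n")
    case True
    then have "x (2*i) < x (2*i+1)" using gap g by force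
    from MVT2[OF this, of "D 0" "D 1"] der show ?thesis by auto
  qed simp
  then obtain \<xi> where \<xi>: "\<And>i. i < 2^n \<Longrightarrow> x (2*i) < \<xi> i \<and> \<xi> i < x (2*i+1) \<and>
      D 0 (x (2*i+1)) - D 0 (x (2*i)) = (x (2*i+1) - x (2*i)) * D 1 (\<xi> i)"
    by metis
  have \<xi>_bound: "\<bar>D 1 (\<xi> i)\<bar> \<le> 2*t/g" if i: "i < 2^n" for i
  proof -
    have "\<bar>D 1 (\<xi> i)\<bar> * g \<le> \<bar>D 1 (\<xi> i)\<bar> * (x (2*i+1) - x (2*i))"
      using gap[OF i] by (intro mult_left_mono) auto
    also have "\<dots> = \<bar>D 0 (x (2*i+1)) - D 0 (x (2*i))\<bar>"
      using \<xi>[OF i] gap[OF i] g by (simp add: abs_mult)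
    also have "\<dots> \<le> 2*t"
      using pts[of "2*i"] pts[of "2*i+1"] i by auto
    finally show ?thesis using g by (simp add: field_simps)
  qed
  have "c * g^n \<le> 2^n * (2*t/g)"
  proof (rule Suc.IH[of "\<lambda>m. D (Suc m)" \<xi>])
    show "\<xi> i \<in> {a..b} \<and> \<bar>D (Suc 0) (\<xi> i)\<bar> \<le> 2*t/g" if "i < 2^n" for i
      using \<xi>[OF that] pts[of "2*i"] pts[of "2*i+1"] \<xi>_bound[OF that] that by auto
    show "\<xi> i + g \<le> \<xi> (Suc i)" if "Suc i < 2^n" for i
      using spaced[of "2*i+1"] \<xi>[of i] \<xi>[OF that] that by fastforce
  qed (use Suc.prems(1) der in auto)
  then show ?case using g by (simp add: field_simps)
qed

lemma compact_small_or_spaced_points: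
  fixes S :: "real set"
  assumes "compact S" "g > 0"
  shows "emeasure lborel S \<le> ennreal (real n * g) \<or>
    (\<exists>x. (\<forall>i\<le>n. x i \<in> S) \<and> (\<forall>i<n. x i + g \<le> x (Suc i)))"
  using assms(1)
proof (induction n arbitrary: S)
  case 0
  then show ?case by (cases "S = {}") auto
next
  case (Suc n)
  show ?case
  proof (cases "S = {}")
    case False
    define x0 where "x0 = Inf S"
    have x0: "x0 \<in> S" and x0_le: "\<And>y. y \<in> S \<Longrightarrow> x0 \<le> y"
      unfolding x0_def using False Suc.prems
      by (auto intro!: closed_contains_Inf cInf_lower
          simp: compact_imp_closed compact_imp_bounded bounded_imp_bdd_below)
    define S' where "S' = S \<inter> {x0+g..}"
    have "compact S'" unfolding S'_def using Suc.prems by (intro compact_Int_closed) auto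
    from Suc.IH[OF this] show ?thesis
    proof
      assume S': "emeasure lborel S' \<le> ennreal (real n * g)"
      have "S \<subseteq> {x0..x0+g} \<union> S'" using x0_le unfolding S'_def by auto
      then have "emeasure lborel S \<le> emeasure lborel ({x0..x0+g} \<union> S')"
        using \<open>compact S'\<close> by (intro emeasure_mono) (auto intro!: borel_compact)
      also have "\<dots> \<le> emeasure lborel {x0..x0+g} + emeasure lborel S'"
        using \<open>compact S'\<close> by (intro emeasure_subadditive) (auto intro!: borel_compact)
      also have "\<dots> \<le> ennreal g + ennreal (real n * g)"
        using S' assms(2) by (intro add_mono) auto
      also have "\<dots> = ennreal (real (Suc n) * g)"
        using assms(2) by (simp add: ennreal_plus[symmetric] algebra_simps del: ennreal_plus)
      finally show ?thesis by simp
    next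
      assume "\<exists>y. (\<forall>i\<le>n. y i \<in> S') \<and> (\<forall>i<n. y i + g \<le> y (Suc i))"
      then obtain y where y: "\<forall>i\<le>n. y i \<in> S'" "\<forall>i<n. y i + g \<le> y (Suc i)" by blast
      define x where "x i = (case i of 0 \<Rightarrow> x0 | Suc j \<Rightarrow> y j)" for i
      have "\<forall>i\<le>Suc n. x i \<in> S" "\<forall>i<Suc n. x i + g \<le> x (Suc i)"
        using x0 y by (auto simp: x_def S'_def split: nat.split)
      then show ?thesis by blast
    qed
  qed simp
qed

lemma sublevel_measure_le:
  fixes D :: "nat \<Rightarrow> real \<Rightarrow> real"
  assumes der: "\<And>m y. (D m has_real_derivative D (Suc m) y) (at y)"
    and low: "\<And>y. y \<in> {a..b} \<Longrightarrow> c \<le> \<bar>D n y\<bar>"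
    and g: "g > 0" and gt: "2^n * t < c * g^n"
  shows "emeasure lborel {y\<in>{a..b}. \<bar>D 0 y\<bar> \<le> t} \<le> ennreal (2^n * g)"
proof -
  define S where "S = {y\<in>{a..b}. \<bar>D 0 y\<bar> \<le> t}"
  have "continuous_on UNIV (D 0)"
    using der by (intro continuous_at_imp_continuous_on) (auto intro: DERIV_isCont)
  then have "closed {y. \<bar>D 0 y\<bar> \<le> t}"
    by (intro closed_Collect_le continuous_intros) auto
  then have "compact ({a..b} \<inter> {y. \<bar>D 0 y\<bar> \<le> t})"
    by (intro compact_Int_closed) auto
  moreover have "S = {a..b} \<inter> {y. \<bar>D 0 y\<bar> \<le> t}" unfolding S_def by auto
  ultimately have "compact S" by simp
  from compact_small_or_spaced_points[OF this g, of "2^n - 1"] show ?thesis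
  proof
    assume "emeasure lborel S \<le> ennreal (real (2^n - 1) * g)"
    also have "\<dots> \<le> ennreal (2^n * g)"
      using g by (intro ennreal_leI mult_right_mono) (auto simp: of_nat_diff)
    finally show ?thesis unfolding S_def .
  next
    assume "\<exists>x. (\<forall>i\<le>2^n - 1. x i \<in> S) \<and> (\<forall>i<2^n - 1. x i + g \<le> x (Suc i))"
    then obtain x where x: "\<forall>i\<le>2^n - 1. x i \<in> S" "\<forall>i<2^n - 1. x i + g \<le> x (Suc i)"
      by blast
    have "c * g^n \<le> 2^n * t"
    proof (rule spaced_points_derivative_bound[OF der low _ _ g])
      show "x i \<in> {a..b} \<and> \<bar>D 0 (x i)\<bar> \<le> t" if "i < 2^n" for i
        using x(1)[rule_format, of i] that unfolding S_def by simp
      show "x i + g \<le> x (Suc i)" if "Suc i < 2^n" for i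
        using x(2) that by auto
    qed
    then show ?thesis using gt by simp
  qed
qed

definition sublevel_const :: "nat \<Rightarrow> real \<Rightarrow> real \<Rightarrow> real" where
  "sublevel_const n c r = (if n = 0 then 4 * r / c else 2^n * (2^(n+2) / c) powr (1 / real n))"

lemma sublevel_const_nonneg: "c > 0 \<Longrightarrow> r > 0 \<Longrightarrow> sublevel_const n c r \<ge> 0"
  unfolding sublevel_const_def by auto

lemma local_sublevel_measure_le:
  fixes D :: "nat \<Rightarrow> real \<Rightarrow> real"
  assumes der: "\<And>m y. (D m has_real_derivative D (Suc m) y) (at y)"
    and bound: "\<And>y. \<bar>D (Suc n) y\<bar> \<le> B"
    and x0: "c \<le> \<bar>D n x0\<bar>" and c: "c > 0" and r: "r > 0" and Br: "B * r \<le> c / 2"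
    and t: "0 < t" "t \<le> 1" and N: "n \<le> N" "1 \<le> N"
  shows "emeasure lborel {y\<in>{x0-r..x0+r}. \<bar>D 0 y\<bar> \<le> t}
           \<le> ennreal (sublevel_const n c r * t powr (1 / real N))"
proof -
  have B: "B \<ge> 0" using bound[of 0] by linarith
  have low: "c/2 \<le> \<bar>D n y\<bar>" if "y \<in> {x0-r..x0+r}" for y
  proof -
    have "\<bar>D n y - D n x0\<bar> \<le> B * \<bar>y - x0\<bar>"
      using field_differentiable_bound[of UNIV "D n" "D (Suc n)" B] der bound by auto
    also have "\<dots> \<le> B * r" using that B by (intro mult_left_mono) auto
    finally show ?thesis using x0 Br by linarith
  qed
  show ?thesis
  proof (cases "n = 0")
    case True
    show ?thesis
    proof (cases "t < c/2")
      case True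
      then have "{y\<in>{x0-r..x0+r}. \<bar>D 0 y\<bar> \<le> t} = {}"
        using low \<open>n = 0\<close> by force
      then show ?thesis by (simp only:) simp
    next
      case False
      have "emeasure lborel {y\<in>{x0-r..x0+r}. \<bar>D 0 y\<bar> \<le> t} \<le> emeasure lborel {x0-r..x0+r}"
        by (intro emeasure_mono) auto
      also have "\<dots> = ennreal (2 * r)" using r by simp
      also have "\<dots> \<le> ennreal (sublevel_const n c r * t powr (1 / real N))"
      proof (intro ennreal_leI)
        have "2 * r \<le> 4 * r / c * t" using False c r by (simp add: field_simps)
        also have "\<dots> \<le> 4 * r / c * t powr (1 / real N)"
          using powr_mono'[of "1 / real N" 1 t] t N c r by (intro mult_left_mono) auto
        finally show "2 * r \<le> sublevel_const n c r * t powr (1 / real N)"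
          using \<open>n = 0\<close> by (simp add: sublevel_const_def)
      qed
      finally show ?thesis .
    qed
  next
    case False
    define g where "g = (2^(n+2) / c * t) powr (1 / real n)"
    have g: "g > 0" unfolding g_def using t c by simp
    have "g^n = 2^(n+2) / c * t"
      unfolding g_def using False t c by (simp add: powr_realpow[symmetric] powr_powr)
    then have "2^n * t < c/2 * g^n" using c t by (simp add: field_simps)
    from sublevel_measure_le[OF der low g this]
    have "emeasure lborel {y\<in>{x0-r..x0+r}. \<bar>D 0 y\<bar> \<le> t} \<le> ennreal (2^n * g)" .
    also have "2^n * g = sublevel_const n c r * t powr (1 / real n)"
      unfolding g_def sublevel_const_def using False c t by (subst powr_mult) auto
    also have "\<dots> \<le> sublevel_const n c r * t powr (1 / real N)"
      using powr_mono'[of "1 / real N" "1 / real n" t] t N False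
      by (intro mult_left_mono sublevel_const_nonneg c r) (auto simp: frac_le)
    finally show ?thesis by (simp add: ennreal_leI order_trans)
  qed
qed

lemma sublevel_in_sets_lborel:
  fixes f :: "real \<Rightarrow> real"
  assumes "continuous_on UNIV f"
  shows "{y\<in>{a..b}. f y \<le> t} \<in> sets lborel"
proof -
  have "closed ({a..b} \<inter> {y. f y \<le> t})"
    by (intro closed_Int closed_Collect_le) (auto intro!: continuous_intros assms)
  moreover have "{y\<in>{a..b}. f y \<le> t} = {a..b} \<inter> {y. f y \<le> t}" by auto
  ultimately show ?thesis by (simp add: borel_closed)
qed

lemma local_sublevel_measure_le_complex:
  fixes D :: "nat \<Rightarrow> real \<Rightarrow> complex"
  assumes der: "\<And>m y. (D m has_vector_derivative D (Suc m) y) (at y)"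
    and bound: "\<And>y. norm (D (Suc n) y) \<le> B"
    and x0: "\<kappa> \<le> norm (D n x0)" and \<kappa>: "\<kappa> > 0" and r: "r > 0" and Br: "B * r \<le> \<kappa> / 4"
    and t: "0 < t" "t \<le> 1" and N: "n \<le> N" "1 \<le> N"
  shows "emeasure lborel {y\<in>{x0-r..x0+r}. norm (D 0 y) \<le> t}
           \<le> ennreal (sublevel_const n (\<kappa>/2) r * t powr (1 / real N))"
proof -
  have "\<kappa>/2 \<le> \<bar>Re (D n x0)\<bar> \<or> \<kappa>/2 \<le> \<bar>Im (D n x0)\<bar>"
    using cmod_le[of "D n x0"] x0 by linarith
  then obtain proj :: "complex \<Rightarrow> real" where proj: "proj = Re \<or> proj = Im"
    and proj_x0: "\<kappa>/2 \<le> \<bar>proj (D n x0)\<bar>"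
    by blast
  have proj_der: "((\<lambda>y. proj (D m y)) has_real_derivative proj (D (Suc m) y)) (at y)" for m y
    using proj der by (auto intro: has_field_derivative_Re has_field_derivative_Im)
  have proj_le: "\<bar>proj z\<bar> \<le> norm z" for z
    using proj abs_Re_le_cmod abs_Im_le_cmod by blast
  have "continuous_on UNIV (\<lambda>y. \<bar>proj (D 0 y)\<bar>)"
    using proj_der by (intro continuous_intros continuous_at_imp_continuous_on)
      (auto intro: DERIV_isCont)
  then have "emeasure lborel {y\<in>{x0-r..x0+r}. norm (D 0 y) \<le> t}
      \<le> emeasure lborel {y\<in>{x0-r..x0+r}. \<bar>proj (D 0 y)\<bar> \<le> t}"
    using proj_le by (intro emeasure_mono sublevel_in_sets_lborel) (auto intro: order_trans)
  also have "\<dots> \<le> ennreal (sublevel_const n (\<kappa>/2) r * t powr (1 / real N))"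
    by (rule local_sublevel_measure_le[where D = "\<lambda>k y. proj (D k y)", OF proj_der _ proj_x0 _ r _ t N])
      (use order_trans[OF proj_le bound] \<kappa> Br in auto)
  finally show ?thesis .
qed

lemma emeasure_interval_le_of_local_bound:
  fixes P :: "real \<Rightarrow> bool"
  assumes r: "r > 0" and meas: "{x. P x} \<in> sets lborel"
    and local: "\<And>x0. emeasure lborel {x\<in>{x0-r..x0+r}. P x} \<le> M"
  shows "emeasure lborel {x\<in>{s..s+K}. P x} \<le> of_nat (Suc (nat \<lceil>K / r\<rceil>)) * M"
proof -
  define L where "L = nat \<lceil>K / r\<rceil>"
  have cover: "{x\<in>{s..s+K}. P x} \<subseteq> (\<Union>k\<le>L. {x\<in>{s + real k * r - r..s + real k * r + r}. P x})"
  proof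
    fix x assume x: "x \<in> {x\<in>{s..s+K}. P x}"
    define k where "k = nat \<lfloor>(x - s) / r\<rfloor>"
    have q: "0 \<le> (x - s) / r" "(x - s) / r \<le> K / r"
      using x r by (auto intro: divide_right_mono)
    have "real k \<le> (x - s) / r" "(x - s) / r < real k + 1"
      using q unfolding k_def by linarith+
    then have "real k * r \<le> x - s" "x - s < real k * r + r"
      using r by (simp_all add: field_simps)
    moreover have "k \<le> L" unfolding L_def k_def
      by (intro nat_mono order_trans[OF floor_mono[OF q(2)] floor_le_ceiling])
    ultimately show "x \<in> (\<Union>k\<le>L. {x\<in>{s + real k * r - r..s + real k * r + r}. P x})"
      using x by (intro UN_I[of k]) auto
  qed
  have sets: "{x\<in>{p..q}. P x} \<in> sets lborel" for p q
    using meas by (simp add: Collect_conj_eq)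
  have "emeasure lborel {x\<in>{s..s+K}. P x}
      \<le> emeasure lborel (\<Union>k\<le>L. {x\<in>{s + real k * r - r..s + real k * r + r}. P x})"
    using cover sets by (intro emeasure_mono) auto
  also have "\<dots> \<le> (\<Sum>k\<le>L. emeasure lborel {x\<in>{s + real k * r - r..s + real k * r + r}. P x})"
    using sets by (intro emeasure_subadditive_finite) auto
  also have "\<dots> \<le> (\<Sum>k\<le>L. M)"
    by (intro sum_mono local)
  finally show ?thesis unfolding L_def by simp
qed

section \<open>Derivatives of translates of a trigonometric polynomial\<close>

definition shifted_trig_deriv ::
    "nat \<Rightarrow> (nat \<Rightarrow> real) \<Rightarrow> (nat \<Rightarrow> complex) \<Rightarrow> real \<Rightarrow> nat \<Rightarrow> complex \<Rightarrow> complex" where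
  "shifted_trig_deriv m a c b n z =
     (\<Sum>j<m. c j * (2*pi*\<i> * of_real (a j))^n * exp (2*pi*\<i> * of_real (a j) * (z + of_real b)))"

lemma shifted_trig_deriv_0:
  assumes "\<forall>x. u x = (\<Sum>j<m. c j * exp (2 * pi * \<i> * complex_of_real (a j * x)))"
  shows "u (y + b) = shifted_trig_deriv m a c b 0 (of_real y)"
  using assms unfolding shifted_trig_deriv_def by (simp add: algebra_simps)

lemma has_field_derivative_shifted_trig_deriv:
  "(shifted_trig_deriv m a c b n has_field_derivative shifted_trig_deriv m a c b (Suc n) z) (at z)"
  unfolding shifted_trig_deriv_def [abs_def]
  by (auto intro!: derivative_eq_intros sum.cong simp: algebra_simps)

lemma has_vector_derivative_shifted_trig_deriv:
  "((\<lambda>y. shifted_trig_deriv m a c b n (of_real y)) has_vector_derivative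
     shifted_trig_deriv m a c b (Suc n) (of_real y)) (at y)"
  by (intro has_vector_derivative_real_field has_field_derivative_shifted_trig_deriv)

lemma continuous_on_shifted_trig_deriv:
  "continuous_on UNIV (\<lambda>y. shifted_trig_deriv m a c b n (of_real y))"
  using has_vector_derivative_shifted_trig_deriv
  by (intro continuous_at_imp_continuous_on ballI has_vector_derivative_continuous) blast

lemma norm_shifted_trig_deriv_le:
  "norm (shifted_trig_deriv m a c b n (of_real y)) \<le> (\<Sum>j<m. norm (c j) * (2*pi*\<bar>a j\<bar>)^n)"
  unfolding shifted_trig_deriv_def
  by (rule order_trans[OF norm_sum sum_mono]) (simp add: norm_mult norm_power)

lemma sum_coeff_shifted_trig_deriv:
  "(\<Sum>n\<le>degree p. coeff p n * shifted_trig_deriv m a c b n z) =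
     (\<Sum>j<m. c j * poly p (2*pi*\<i> * of_real (a j)) * exp (2*pi*\<i> * of_real (a j) * (z + of_real b)))"
  unfolding shifted_trig_deriv_def poly_altdef sum_distrib_left sum_distrib_right
  by (subst sum.swap) (auto intro!: sum.cong simp: ac_simps)

lemma exists_norm_ge_of_norm_sum:
  fixes w z :: "nat \<Rightarrow> 'a::real_normed_div_algebra"
  assumes "finite A" and \<kappa>: "\<kappa> > 0" and "\<kappa> \<le> norm (\<Sum>n\<in>A. w n * z n)"
  shows "\<exists>n\<in>A. \<kappa> / ((\<Sum>n\<in>A. norm (w n)) + 1) \<le> norm (z n)"
proof (rule ccontr)
  define P where "P = (\<Sum>n\<in>A. norm (w n)) + 1"
  have P: "P > 0" unfolding P_def by (simp add: add_nonneg_pos sum_nonneg)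
  assume "\<not> ?thesis"
  then have small: "\<And>n. n \<in> A \<Longrightarrow> norm (z n) \<le> \<kappa> / P" unfolding P_def by force
  have "\<kappa> \<le> (\<Sum>n\<in>A. norm (w n) * norm (z n))"
    using assms(3) by (rule order_trans[OF _ order_trans[OF norm_sum]]) (simp add: norm_mult)
  also have "\<dots> \<le> (\<Sum>n\<in>A. norm (w n) * (\<kappa> / P))"
    using small by (intro sum_mono mult_left_mono) auto
  also have "\<dots> = (P - 1) * (\<kappa> / P)"
    unfolding sum_distrib_right[symmetric] P_def by simp
  also have "\<dots> < \<kappa>" using P \<kappa> by (simp add: field_simps)
  finally show False by simp
qed

lemma trig_poly_grouped_coeff_nonzero:
  fixes a :: "nat \<Rightarrow> real" and c :: "nat \<Rightarrow> complex"
  assumes "\<forall>x. u x = (\<Sum>j<m. c j * exp (2 * pi * \<i> * complex_of_real (a j * x)))"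
    and "u \<noteq> (\<lambda>x. 0)"
  shows "\<exists>\<alpha>\<in>a ` {..<m}. (\<Sum>j\<in>{j\<in>{..<m}. a j = \<alpha>}. c j) \<noteq> 0"
proof (rule ccontr)
  assume zero: "\<not> ?thesis"
  have "u x = 0" for x
  proof -
    have "u x = (\<Sum>j<m. c j * exp (2 * pi * \<i> * of_real (a j * x)))"
      using assms(1) by blast
    also have "\<dots> = (\<Sum>\<alpha>\<in>a ` {..<m}. \<Sum>j\<in>{j\<in>{..<m}. a j = \<alpha>}. c j * exp (2 * pi * \<i> * of_real (a j * x)))"
      by (rule sum.image_gen) simp
    also have "\<dots> = (\<Sum>\<alpha>\<in>a ` {..<m}. (\<Sum>j\<in>{j\<in>{..<m}. a j = \<alpha>}. c j) * exp (2 * pi * \<i> * of_real (\<alpha> * x)))"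
      unfolding sum_distrib_right by (intro sum.cong refl) auto
    also have "\<dots> = 0" using zero by (intro sum.neutral) auto
    finally show ?thesis .
  qed
  then show False using assms(2) by auto
qed

lemma shifted_trig_deriv_nondegenerate:
  fixes a :: "nat \<Rightarrow> real" and c :: "nat \<Rightarrow> complex"
  assumes rep: "\<forall>x. u x = (\<Sum>j<m. c j * exp (2 * pi * \<i> * complex_of_real (a j * x)))"
    and nz: "u \<noteq> (\<lambda>x. 0)"
  shows "\<exists>\<kappa>>0. \<exists>d. \<forall>b y. \<exists>n\<le>d. \<kappa> \<le> norm (shifted_trig_deriv m a c b n (of_real y))"
proof -
  define L where "L \<beta> = 2*pi*\<i> * complex_of_real \<beta>" for \<beta>
  define C where "C \<alpha> = (\<Sum>j\<in>{j\<in>{..<m}. a j = \<alpha>}. c j)" for \<alpha>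
  obtain \<alpha> where "\<alpha> \<in> a ` {..<m}" and C\<alpha>: "C \<alpha> \<noteq> 0"
    using trig_poly_grouped_coeff_nonzero[OF rep nz] unfolding C_def by blast
  define p where "p = (\<Prod>\<beta>\<in>a ` {..<m} - {\<alpha>}. [:- L \<beta>, 1:])"
  have poly_p: "poly p z = (\<Prod>\<beta>\<in>a ` {..<m} - {\<alpha>}. z - L \<beta>)" for z
    unfolding p_def by (simp add: poly_prod)
  have p\<alpha>: "poly p (L \<alpha>) \<noteq> 0"
    unfolding poly_p by (auto simp: L_def)
  have p_other: "poly p (L (a j)) = 0" if "j < m" "a j \<noteq> \<alpha>" for j
    unfolding poly_p using that by (auto intro!: bexI[of _ "a j"])
  define \<kappa>0 where "\<kappa>0 = norm (C \<alpha>) * norm (poly p (L \<alpha>))"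
  have \<kappa>0: "\<kappa>0 > 0" unfolding \<kappa>0_def using C\<alpha> p\<alpha> by simp
  have combination: "\<kappa>0 \<le> norm (\<Sum>n\<le>degree p. coeff p n * shifted_trig_deriv m a c b n (of_real y))"
    for b y
  proof -
    have "(\<Sum>n\<le>degree p. coeff p n * shifted_trig_deriv m a c b n (of_real y))
        = (\<Sum>j<m. if a j = \<alpha> then c j * poly p (L \<alpha>) * exp (L \<alpha> * of_real (y + b)) else 0)"
      unfolding sum_coeff_shifted_trig_deriv using p_other by (intro sum.cong) (auto simp: L_def)
    also have "\<dots> = C \<alpha> * poly p (L \<alpha>) * exp (L \<alpha> * of_real (y + b))"
      unfolding C_def sum_distrib_right by (simp add: sum.inter_filter[symmetric])
    finally show ?thesis unfolding \<kappa>0_def L_def by (simp add: norm_mult)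
  qed
  define \<kappa> where "\<kappa> = \<kappa>0 / ((\<Sum>n\<le>degree p. norm (coeff p n)) + 1)"
  have "\<exists>n\<in>{..degree p}. \<kappa> \<le> norm (shifted_trig_deriv m a c b n (of_real y))" for b y
    unfolding \<kappa>_def by (rule exists_norm_ge_of_norm_sum[OF finite_atMost \<kappa>0 combination])
  moreover have "\<kappa> > 0"
    unfolding \<kappa>_def using \<kappa>0 by (simp add: add_nonneg_pos sum_nonneg)
  ultimately show ?thesis unfolding Bex_def atMost_iff by blast
qed

lemma trig_poly_shift_sublevel_le:
  fixes a :: "nat \<Rightarrow> real" and c :: "nat \<Rightarrow> complex"
  assumes rep: "\<forall>x. u x = (\<Sum>j<m. c j * exp (2 * pi * \<i> * complex_of_real (a j * x)))"
    and nz: "u \<noteq> (\<lambda>x. 0)"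
  shows "\<exists>C N. 0 \<le> C \<and> 1 \<le> N \<and> (\<forall>s b t. 0 < t \<longrightarrow> t \<le> 1 \<longrightarrow>
           emeasure lborel {x\<in>{s..s+K}. cmod (u (x + b)) \<le> t} \<le> ennreal (C * t powr (1 / real N)))"
proof -
  let ?D = "\<lambda>b k y. shifted_trig_deriv m a c b k (of_real y)"
  obtain \<kappa> d where \<kappa>: "\<kappa> > 0" and nondeg: "\<forall>b y. \<exists>n\<le>d. \<kappa> \<le> norm (?D b n y)"
    using shifted_trig_deriv_nondegenerate[OF rep nz] by blast
  define B where "B = (\<Sum>n\<le>Suc d. \<Sum>j<m. norm (c j) * (2*pi*\<bar>a j\<bar>)^n)"
  have B: "B \<ge> 0" unfolding B_def by (intro sum_nonneg) auto
  have D_bound: "norm (?D b (Suc n) y) \<le> B" if "n \<le> d" for b n y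
    unfolding B_def using that
    by (intro order_trans[OF norm_shifted_trig_deriv_le] member_le_sum) (auto intro!: sum_nonneg)
  define r where "r = \<kappa> / (4 * (B + 1))"
  have r: "r > 0" unfolding r_def using \<kappa> B by simp
  have Br: "B * r \<le> \<kappa> / 4"
    unfolding r_def using \<kappa> B by (simp add: field_simps)
  define W where "W = (\<Sum>n\<le>d. sublevel_const n (\<kappa>/2) r)"
  have W: "W \<ge> 0" "\<And>n. n \<le> d \<Longrightarrow> sublevel_const n (\<kappa>/2) r \<le> W"
    unfolding W_def using sublevel_const_nonneg[of "\<kappa>/2" r] \<kappa> r
    by (auto intro!: sum_nonneg member_le_sum)
  have meas: "{x. cmod (u (x + b)) \<le> t} \<in> sets lborel" for b t
  proof -
    have "closed {x. cmod (u (x + b)) \<le> t}"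
      unfolding shifted_trig_deriv_0[OF rep]
      by (intro closed_Collect_le continuous_intros continuous_on_shifted_trig_deriv)
    then show ?thesis by (simp add: borel_closed)
  qed
  have local: "emeasure lborel {x\<in>{x0-r..x0+r}. cmod (u (x + b)) \<le> t}
      \<le> ennreal (W * t powr (1 / real (Suc d)))" if t: "0 < t" "t \<le> 1" for x0 b t
  proof -
    obtain n where n: "n \<le> d" "\<kappa> \<le> norm (?D b n x0)" using nondeg by blast
    have "emeasure lborel {x\<in>{x0-r..x0+r}. cmod (u (x + b)) \<le> t}
        \<le> ennreal (sublevel_const n (\<kappa>/2) r * t powr (1 / real (Suc d)))"
      unfolding shifted_trig_deriv_0[OF rep]
      by (rule local_sublevel_measure_le_complex[where D = "?D b", OF _ D_bound[OF n(1)] n(2) \<kappa> r Br t])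
        (use n(1) has_vector_derivative_shifted_trig_deriv in auto)
    also have "\<dots> \<le> ennreal (W * t powr (1 / real (Suc d)))"
      using W(2)[OF n(1)] by (intro ennreal_leI mult_right_mono) auto
    finally show ?thesis .
  qed
  have "emeasure lborel {x\<in>{s..s+K}. cmod (u (x + b)) \<le> t}
      \<le> ennreal (real (Suc (nat \<lceil>K / r\<rceil>)) * W * t powr (1 / real (Suc d)))"
    if "0 < t" "t \<le> 1" for s b t
  proof -
    have "emeasure lborel {x\<in>{s..s+K}. cmod (u (x + b)) \<le> t}
        \<le> ennreal (real (Suc (nat \<lceil>K / r\<rceil>))) * ennreal (W * t powr (1 / real (Suc d)))"
      using emeasure_interval_le_of_local_bound[OF r meas local[OF that]]
      by (simp only: ennreal_of_nat_eq_real_of_nat)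
    also have "\<dots> = ennreal (real (Suc (nat \<lceil>K / r\<rceil>)) * W * t powr (1 / real (Suc d)))"
      unfolding mult.assoc using W by (intro ennreal_mult[symmetric]) auto
    finally show ?thesis .
  qed
  then show ?thesis using W
    by (intro exI[of _ "real (Suc (nat \<lceil>K / r\<rceil>)) * W"] exI[of _ "Suc d"]) auto
qed

lemma trig_poly_shift_level_sum_le:
  fixes a :: "nat \<Rightarrow> real" and c :: "nat \<Rightarrow> complex"
  assumes rep: "\<forall>x. u x = (\<Sum>j<m. c j * exp (2 * pi * \<i> * complex_of_real (a j * x)))"
    and nz: "u \<noteq> (\<lambda>x. 0)"
  shows "\<exists>C\<ge>0. \<forall>s b.
           (\<Sum>j. emeasure lborel {x\<in>{s..s+K}. cmod (u (x + b)) \<le> exp (- real j)}) \<le> ennreal C"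
proof -
  obtain C0 N where C0: "0 \<le> C0" "1 \<le> N" and sublevel: "\<And>s b t. 0 < t \<Longrightarrow> t \<le> 1 \<Longrightarrow>
      emeasure lborel {x\<in>{s..s+K}. cmod (u (x + b)) \<le> t} \<le> ennreal (C0 * t powr (1 / real N))"
    using trig_poly_shift_sublevel_le[OF rep nz] by blast
  define q where "q = exp (- 1 / real N)"
  have q: "0 \<le> q" "q < 1" unfolding q_def using C0 by auto
  have "exp (- real j) powr (1 / real N) = q ^ j" for j
    unfolding q_def powr_def exp_of_nat_mult[symmetric] by simp
  then have "emeasure lborel {x\<in>{s..s+K}. cmod (u (x + b)) \<le> exp (- real j)} \<le> ennreal (C0 * q ^ j)"
    for s b j
    using sublevel[of "exp (- real j)" s b] by simp
  then have "(\<Sum>j. emeasure lborel {x\<in>{s..s+K}. cmod (u (x + b)) \<le> exp (- real j)})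
      \<le> (\<Sum>j. ennreal (C0 * q ^ j))" for s b
    by (intro suminf_le) auto
  also have "(\<Sum>j. ennreal (C0 * q ^ j)) = ennreal (C0 / (1 - q))"
    using sums_mult[OF geometric_sums, of q C0] q C0 by (intro suminf_ennreal_eq) auto
  finally show ?thesis using C0 q by (intro exI[of _ "C0 / (1 - q)"]) auto
qed

section \<open>Counting levels\<close>

definition level_count :: "real \<Rightarrow> ennreal" where
  "level_count v = (\<Sum>j. indicator {y. y \<le> exp (- real j)} v)"

lemma borel_measurable_level_count [measurable]:
  "f \<in> borel_measurable M \<Longrightarrow> (\<lambda>x. level_count (f x)) \<in> borel_measurable M"
  unfolding level_count_def by measurable

lemma nn_integral_level_count:
  assumes [measurable]: "f \<in> borel_measurable lborel" "A \<in> sets lborel"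
  shows "(\<integral>\<^sup>+x. level_count (f x) * indicator A x \<partial>lborel)
    = (\<Sum>j. emeasure lborel {x\<in>A. f x \<le> exp (- real j)})"
proof -
  have "level_count (f x) * indicator A x = (\<Sum>j. indicator {x\<in>A. f x \<le> exp (- real j)} x)" for x
    unfolding level_count_def ennreal_suminf_multc[symmetric]
    by (intro suminf_cong) (auto simp: indicator_def)
  then show ?thesis by (simp add: nn_integral_suminf)
qed

lemma of_nat_le_level_count:
  assumes "\<And>j. j < n \<Longrightarrow> v \<le> exp (- real j)"
  shows "of_nat n \<le> level_count v"
proof -
  have "(of_nat n :: ennreal) = (\<Sum>j<n. indicator {y. y \<le> exp (- real j)} v)"
    using assms by simp
  also have "\<dots> \<le> level_count v"
    unfolding level_count_def by (intro sum_le_suminf) auto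
  finally show ?thesis .
qed

lemma exp_neg_less_of_level_count_finite:
  assumes "level_count v < top"
  shows "\<exists>M. exp (- real M) < v \<and> of_nat M \<le> level_count v"
proof -
  obtain r where "r \<ge> 0" and r: "level_count v = ennreal r"
    using assms less_top_ennreal by blast
  have "\<exists>j. \<not> v \<le> exp (- real j)"
  proof (rule ccontr)
    assume "\<not> ?thesis"
    moreover obtain n :: nat where "r < real n" using reals_Archimedean2 by blast
    ultimately have "ennreal (real n) \<le> ennreal r"
      using of_nat_le_level_count[of n v] r by (simp add: ennreal_of_nat_eq_real_of_nat)
    with \<open>r < real n\<close> \<open>r \<ge> 0\<close> show False by (simp add: ennreal_le_iff2)
  qed
  then have "\<not> v \<le> exp (- real (LEAST j. \<not> v \<le> exp (- real j)))"
    by (rule LeastI_ex)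
  moreover have "of_nat (LEAST j. \<not> v \<le> exp (- real j)) \<le> level_count v"
    using not_less_Least by (intro of_nat_le_level_count) blast
  ultimately show ?thesis by (intro exI) auto
qed

lemma exp_neg_le_prod_of_level_count:
  fixes v :: "nat \<Rightarrow> real"
  assumes "(\<Sum>i<k. level_count (v i)) < ennreal r"
  shows "exp (- r) \<le> (\<Prod>i<k. v i)"
proof -
  have "level_count (v i) < top" if "i < k" for i
  proof -
    have "level_count (v i) \<le> (\<Sum>i<k. level_count (v i))"
      using that by (intro member_le_sum) auto
    also have "\<dots> < ennreal r" by fact
    finally show ?thesis using ennreal_less_top order.strict_trans by blast
  qed
  then have "\<exists>M. i < k \<longrightarrow> exp (- real M) < v i \<and> of_nat M \<le> level_count (v i)" for i
    using exp_neg_less_of_level_count_finite by blast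
  then obtain M where M: "\<And>i. i < k \<Longrightarrow> exp (- real (M i)) < v i \<and> of_nat (M i) \<le> level_count (v i)"
    by metis
  have "ennreal (real (\<Sum>i<k. M i)) = (\<Sum>i<k. of_nat (M i))"
    by (simp add: ennreal_of_nat_eq_real_of_nat)
  also have "\<dots> \<le> (\<Sum>i<k. level_count (v i))" using M by (intro sum_mono) auto
  also have "\<dots> < ennreal r" by fact
  finally have "real (\<Sum>i<k. M i) < r" by (subst (asm) ennreal_less_iff) (auto simp: sum_nonneg)
  then have "exp (- r) \<le> exp (- real (\<Sum>i<k. M i))" by simp
  also have "\<dots> = (\<Prod>i<k. exp (- real (M i)))"
    by (simp add: exp_sum[symmetric] sum_negf)
  also have "\<dots> \<le> (\<Prod>i<k. v i)"
    using M by (intro prod_mono) (auto simp: less_imp_le)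
  finally show ?thesis .
qed

lemma large_subset_prod_ge:
  fixes v :: "nat \<Rightarrow> real \<Rightarrow> real"
  assumes v [measurable]: "\<And>i. v i \<in> borel_measurable lborel"
    and I [measurable]: "I \<in> sets lborel"
    and levels: "\<And>i. i < k \<Longrightarrow> (\<Sum>j. emeasure lborel {x\<in>I. v i x \<le> exp (- real j)}) \<le> ennreal C"
    and C: "C \<ge> 0" and \<eta>: "\<eta> > 0"
  shows "\<exists>E\<in>sets lborel. E \<subseteq> I \<and> emeasure lborel (I - E) \<le> ennreal (C / \<eta>) \<and>
           (\<forall>x\<in>E. exp (- \<eta> * real k) \<le> (\<Prod>i<k. v i x))"
proof (cases "k = 0")
  case True
  then show ?thesis using I by (intro bexI[of _ I]) auto
next
  case False
  define F where "F x = (\<Sum>i<k. level_count (v i x))" for x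
  define Bad where "Bad = {x\<in>I. 1 \<le> ennreal (1 / (\<eta> * real k)) * F x}"
  have [measurable]: "F \<in> borel_measurable lborel" unfolding F_def by measurable
  have "Bad \<in> sets lborel" unfolding Bad_def by measurable
  have "(\<integral>\<^sup>+x. F x * indicator I x \<partial>lborel) = (\<Sum>i<k. \<integral>\<^sup>+x. level_count (v i x) * indicator I x \<partial>lborel)"
    unfolding F_def sum_distrib_right by (intro nn_integral_sum) auto
  also have "\<dots> \<le> (\<Sum>i<k. ennreal C)"
    using levels by (intro sum_mono) (simp add: nn_integral_level_count[OF v I])
  finally have integral: "(\<integral>\<^sup>+x. F x * indicator I x \<partial>lborel) \<le> ennreal (real k * C)"
    using C by (simp add: ennreal_of_nat_eq_real_of_nat ennreal_mult)
  have "emeasure lborel Bad \<le> ennreal (1 / (\<eta> * real k)) * (\<integral>\<^sup>+x. F x * indicator I x \<partial>lborel)"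
    unfolding Bad_def using I by (intro nn_integral_Markov_inequality) auto
  also have "\<dots> \<le> ennreal (1 / (\<eta> * real k)) * ennreal (real k * C)"
    by (intro mult_left_mono integral) auto
  also have "\<dots> = ennreal (C / \<eta>)"
    using False \<eta> C by (simp add: ennreal_mult[symmetric])
  finally have "emeasure lborel Bad \<le> ennreal (C / \<eta>)" .
  moreover have "exp (- (\<eta> * real k)) \<le> (\<Prod>i<k. v i x)" if "x \<in> I - Bad" for x
  proof (rule exp_neg_le_prod_of_level_count)
    have "\<not> ennreal (\<eta> * real k) \<le> F x"
    proof
      assume "ennreal (\<eta> * real k) \<le> F x"
      then have "ennreal (1 / (\<eta> * real k)) * ennreal (\<eta> * real k)
          \<le> ennreal (1 / (\<eta> * real k)) * F x"
        by (intro mult_left_mono) auto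
      moreover have "ennreal (1 / (\<eta> * real k)) * ennreal (\<eta> * real k) = 1"
        using False \<eta> by (simp add: ennreal_mult[symmetric])
      ultimately show False using that unfolding Bad_def by simp
    qed
    then show "(\<Sum>i<k. level_count (v i x)) < ennreal (\<eta> * real k)"
      unfolding F_def by simp
  qed
  moreover have "I - (I - Bad) = Bad" unfolding Bad_def by auto
  ultimately show ?thesis using I \<open>Bad \<in> sets lborel\<close> by (intro bexI[of _ "I - Bad"]) auto
qed

lemma interval_large_subset_prod_ge:
  fixes v :: "nat \<Rightarrow> real \<Rightarrow> real" and I :: "real set"
  assumes v: "\<And>i. continuous_on UNIV (v i)"
    and levels: "\<And>i. (\<Sum>j. emeasure lborel {x\<in>{s..s+K}. v i x \<le> exp (- real j)}) \<le> ennreal C"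
    and I: "I = {s<..<s+K} \<or> I = {s..s+K} \<or> I = {s<..s+K} \<or> I = {s..<s+K}"
    and K: "K > 0" and C: "C \<ge> 0" and \<eta>: "\<eta> > 0" "C / \<eta> < K / 2"
  shows "\<exists>E\<in>sets lborel. E \<subseteq> I \<and> measure lebesgue E > measure lebesgue I / 2 \<and>
           (\<forall>x\<in>E. exp (- \<eta> * real k) \<le> (\<Prod>i<k. v i x))"
proof -
  have I_sets: "I \<in> sets lborel" and I_sub: "I \<subseteq> {s..s+K}"
    and I_measure: "emeasure lborel I = ennreal K"
    using I K by auto
  have "(\<Sum>j. emeasure lborel {x\<in>I. v i x \<le> exp (- real j)})
      \<le> (\<Sum>j. emeasure lborel {x\<in>{s..s+K}. v i x \<le> exp (- real j)})" for i
    using I_sub sublevel_in_sets_lborel[OF v] by (intro suminf_le emeasure_mono) auto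
  then have levels_I: "(\<Sum>j. emeasure lborel {x\<in>I. v i x \<le> exp (- real j)}) \<le> ennreal C" for i
    by (rule order_trans[OF _ levels])
  have v_meas: "v i \<in> borel_measurable lborel" for i
    unfolding measurable_lborel2 by (rule borel_measurable_continuous_onI[OF v])
  from large_subset_prod_ge[where k = k, OF v_meas I_sets levels_I C \<eta>(1)]
  obtain E where E: "E \<in> sets lborel" "E \<subseteq> I \<and> emeasure lborel (I - E) \<le> ennreal (C / \<eta>) \<and>
      (\<forall>x\<in>E. exp (- \<eta> * real k) \<le> (\<Prod>i<k. v i x))"
    by (rule bexE)
  have "measure lborel E = K - measure lborel (I - E)"
    using E I_sets I_measure K by (subst measure_Diff) (auto simp: measure_def)
  moreover have "measure lborel (I - E) \<le> C / \<eta>"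
    using E(2) \<eta> C unfolding measure_def by (intro enn2real_leI) auto
  moreover have "measure lborel I = K" using I_measure K by (simp add: measure_def)
  ultimately have "measure lborel E > measure lborel I / 2" using \<eta>(2) by linarith
  then show ?thesis using E I_sets by (intro bexI[of _ E]) auto
qed

theorem lemma3p2:
  fixes u :: "real \<Rightarrow> complex" and K :: real
  assumes "trig_poly u" and "u \<noteq> (\<lambda>x. 0)" and "K > 0"
  shows "\<exists>\<eta>::real. \<forall>(k::nat) (b::nat \<Rightarrow> real) (I::real set).
           (\<exists>s. I = {s<..<s+K} \<or> I = {s..s+K} \<or> I = {s<..s+K} \<or> I = {s..<s+K}) \<longrightarrow>
           (\<exists>E. E \<in> sets lebesgue \<and> E \<subseteq> I \<and> measure lebesgue E > measure lebesgue I / 2 \<and>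
                (\<forall>x\<in>E. norm (\<Prod>i<k. u (x + b i)) \<ge> exp (- \<eta> * real k)))"
proof -
  obtain m :: nat and a :: "nat \<Rightarrow> real" and c :: "nat \<Rightarrow> complex" where
    rep: "\<forall>x. u x = (\<Sum>j<m. c j * exp (2 * pi * \<i> * complex_of_real (a j * x)))"
    using assms(1) unfolding trig_poly_def by blast
  obtain C where "C \<ge> 0" and levels: "\<And>s b.
      (\<Sum>j. emeasure lborel {x\<in>{s..s+K}. cmod (u (x + b)) \<le> exp (- real j)}) \<le> ennreal C"
    using trig_poly_shift_level_sum_le[OF rep assms(2)] by blast
  have u_cont: "continuous_on UNIV (\<lambda>x. cmod (u (x + b)))" for b
    unfolding shifted_trig_deriv_0[OF rep]
    by (intro continuous_intros continuous_on_shifted_trig_deriv)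
  define \<eta> where "\<eta> = 2 * C / K + 1"
  have \<eta>: "\<eta> > 0" "C / \<eta> < K / 2"
    using \<open>C \<ge> 0\<close> assms(3) by (auto simp: \<eta>_def field_simps)
  show ?thesis
  proof (intro exI[of _ \<eta>] allI impI, elim exE)
    fix k :: nat and b :: "nat \<Rightarrow> real" and I :: "real set" and s :: real
    assume "I = {s<..<s+K} \<or> I = {s..s+K} \<or> I = {s<..s+K} \<or> I = {s..<s+K}"
    from interval_large_subset_prod_ge[where v = "\<lambda>i x. cmod (u (x + b i))",
        OF u_cont levels this assms(3) \<open>C \<ge> 0\<close> \<eta>]
    obtain E where "E \<in> sets lborel" "E \<subseteq> I" "measure lebesgue E > measure lebesgue I / 2"
      and "\<forall>x\<in>E. exp (- \<eta> * real k) \<le> (\<Prod>i<k. cmod (u (x + b i)))"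
      by blast
    then show "\<exists>E. E \<in> sets lebesgue \<and> E \<subseteq> I \<and> measure lebesgue E > measure lebesgue I / 2 \<and>
                (\<forall>x\<in>E. norm (\<Prod>i<k. u (x + b i)) \<ge> exp (- \<eta> * real k))"
      by (intro exI[of _ E]) (auto simp: prod_norm)
  qed
qed

end
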